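(* Let $\mathcal{L}$ be a linear space of random variables on $\Omega$ containing all constants, and let $P$ be a coherent$_1$ marginal prevision on $\mathcal{L}$. Let $\mathcal{B}=\{B: B\subseteq\Omega,\ B\in\mathcal{L},\ P(B)>0\}$ (events identified with indicators), and assume $XB\in\mathcal{L}$ for every $X\in\mathcal{L}$ and $B\in\mathcal{B}$. Define $L(X\mid B)=P(XB)/P(B)$ for $X\in\mathcal{L}$, $B\in\mathcal{B}$. Then $L(\cdot\mid\cdot)$ is a finitely additive conditional expectation on $\mathcal{L}\times\mathcal{B}$ (with $L=P$ as the underlying finitely additive expectation on $\mathcal{L}$).
   Context: Random variables are real-valued functions on a nonempty set $\Omega$; events are subsets, identified with indicator functions; $XB$ is the pointwise product. Previsions are extended real numbers; $P(X)=P(X\mid\Omega)$. Coherence$_1$: a collection $\{P(X_i\mid B_i):i\in I\}$ (with nonempty $B_i$) is coherent$_1$ if for every finite $\{i_1,\dots,i_n\}\subseteq I$, all real $\alpha_1,\dots,\alpha_n$ with $\alpha_j\ge 0$ whenever $P(X_{i_j}\mid B_{i_j})=+\infty$ and $\alpha_j\le 0$ whenever $P(X_{i_j}\mid B_{i_j})=-\infty$, and all real $c_j$ with $c_j=P(X_{i_j}\mid B_{i_j})$ whenever finite, $\sup_\omega \sum_{j=1}^n \alpha_j B_{i_j}(\omega)[X_{i_j}(\omega)-c_j]\ge 0$. A finitely additive expectation on a linear space $\mathcal{L}$ containing constants is a map $L:\mathcal{L}\to\mathbb{R}\cup\{\pm\infty\}$ that is nonnegative ($X\le Y$ implies $L(X)\le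 L(Y)$), extended-linear ($L(\alpha X+\beta Y)=\alpha L(X)+\beta L(Y)$ for real $\alpha,\beta$ whenever the right side is not $\infty-\infty$, with $0\times(\pm\infty)=0$), and has $L(1)=1$. Finitely additive conditional expectation: let $\mathcal{L}$ be a linear space of random variables, $\mathcal{B}$ a collection of nonempty events including $\Omega$, with $XB\in\mathcal{L}$ for all $X\in\mathcal{L}$, $B\in\mathcal{B}$, and let $L$ be a finitely additive expectation on $\mathcal{L}$. A map $L(\cdot\mid\cdot):\mathcal{L}\times\mathcal{B}\to\mathbb{R}\cup\{\pm\infty\}$ is a finitely additive conditional expectation if for each $B\in\mathcal{B}$, $L(\cdot\mid B)$ is a finitely additive expectation on $\mathcal{L}$ with $L(XB\mid B)=L(X\mid B)$ for all $X\in\mathcal{L}$, and $\{L(X\mid B):X\in\mathcal{L},B\in\mathcal{B}\}$ is a coherent$_1$ conditional prevision. *)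

theory Defs
  imports "HOL-Analysis.Analysis"
begin

text \<open>Random variables on \<Omega> are functions 'w \<Rightarrow> real, with \<Omega> = UNIV :: 'w set.
  Events are sets B :: 'w set, identified with indicator B.  Previsions are ereal.\<close>

definition rv_linear_space :: "('w \<Rightarrow> real) set \<Rightarrow> bool" where
  "rv_linear_space L \<longleftrightarrow>
     (\<forall>X\<in>L. \<forall>Y\<in>L. (\<lambda>w. X w + Y w) \<in> L) \<and>
     (\<forall>a::real. \<forall>X\<in>L. (\<lambda>w. a * X w) \<in> L) \<and>
     (\<forall>c::real. (\<lambda>w. c) \<in> L)"

definition coherent1 :: "(('w \<Rightarrow> real) \<times> 'w set) set \<Rightarrow> (('w \<Rightarrow> real) \<Rightarrow> 'w set \<Rightarrow> ereal) \<Rightarrow> bool" where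
  "coherent1 I Pr \<longleftrightarrow>
     (\<forall>i\<in>I. snd i \<noteq> {}) \<and>
     (\<forall>S (\<alpha>::('w \<Rightarrow> real) \<times> 'w set \<Rightarrow> real) (c::('w \<Rightarrow> real) \<times> 'w set \<Rightarrow> real).
        finite S \<and> S \<subseteq> I \<and>
        (\<forall>i\<in>S. Pr (fst i) (snd i) = \<infinity> \<longrightarrow> \<alpha> i \<ge> 0) \<and>
        (\<forall>i\<in>S. Pr (fst i) (snd i) = -\<infinity> \<longrightarrow> \<alpha> i \<le> 0) \<and>
        (\<forall>i\<in>S. \<bar>Pr (fst i) (snd i)\<bar> \<noteq> \<infinity> \<longrightarrow> Pr (fst i) (snd i) = ereal (c i))
        \<longrightarrow> (SUP w. ereal (\<Sum>i\<in>S. \<alpha> i * indicator (snd i) w * (fst i w - c i))) \<ge> 0)"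

definition coherent1_marginal :: "('w \<Rightarrow> real) set \<Rightarrow> (('w \<Rightarrow> real) \<Rightarrow> ereal) \<Rightarrow> bool" where
  "coherent1_marginal L P \<longleftrightarrow> coherent1 (L \<times> {UNIV}) (\<lambda>X B. P X)"

definition fa_expectation :: "('w \<Rightarrow> real) set \<Rightarrow> (('w \<Rightarrow> real) \<Rightarrow> ereal) \<Rightarrow> bool" where
  "fa_expectation L E \<longleftrightarrow>
     (\<forall>X\<in>L. \<forall>Y\<in>L. (\<forall>w. X w \<le> Y w) \<longrightarrow> E X \<le> E Y) \<and>
     (\<forall>X\<in>L. \<forall>Y\<in>L. \<forall>a b::real.
        \<not> ({ereal a * E X, ereal b * E Y} = {\<infinity>, -\<infinity>}) \<longrightarrow>
        E (\<lambda>w. a * X w + b * Y w) = ereal a * E X + ereal b * E Y) \<and>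
     E (\<lambda>w. 1) = 1"

definition fa_cond_expectation ::
  "('w \<Rightarrow> real) set \<Rightarrow> 'w set set \<Rightarrow> (('w \<Rightarrow> real) \<Rightarrow> ereal)
    \<Rightarrow> (('w \<Rightarrow> real) \<Rightarrow> 'w set \<Rightarrow> ereal) \<Rightarrow> bool" where
  "fa_cond_expectation L \<B> E Lc \<longleftrightarrow>
     rv_linear_space L \<and>
     (\<forall>B\<in>\<B>. B \<noteq> {}) \<and> UNIV \<in> \<B> \<and>
     (\<forall>X\<in>L. \<forall>B\<in>\<B>. (\<lambda>w. X w * indicator B w) \<in> L) \<and>
     fa_expectation L E \<and>
     (\<forall>B\<in>\<B>. fa_expectation L (\<lambda>X. Lc X B) \<and>
        (\<forall>X\<in>L. Lc (\<lambda>w. X w * indicator B w) B = Lc X B)) \<and>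
     coherent1 (L \<times> \<B>) Lc"

end

theory Submission
  imports Defs
begin

text \<open>Marginal coherence yields the sum bound: if \<open>\<Sum>j. \<beta>\<^sub>j V\<^sub>j \<le> k\<close> pointwise, then
  \<open>\<Sum>j. \<beta>\<^sub>j P(V\<^sub>j) \<le> k\<close>, since otherwise suitable real prices make the gamble
  \<open>\<Sum>j. \<beta>\<^sub>j (V\<^sub>j - d\<^sub>j)\<close> uniformly negative.  Monotonicity, normalisation and extended
  linearity of \<open>P\<close> follow, and dividing by the positive real \<open>P(B)\<close> transfers them to
  \<open>P(X B) / P(B)\<close>.  Coherence of the conditional previsions reduces to that of \<open>P\<close>,
  because every conditional gamble is a sum of marginal gambles on \<open>X B\<close> and on \<open>B\<close>.\<close>

lemma sum_stakes_common_price: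
  fixes x :: ereal
  assumes "finite J"
    and "x = \<infinity> \<Longrightarrow> \<forall>j\<in>J. \<beta> j \<ge> 0"
    and "x = -\<infinity> \<Longrightarrow> \<forall>j\<in>J. \<beta> j \<le> 0"
    and "\<forall>j\<in>J. \<bar>x\<bar> \<noteq> \<infinity> \<longrightarrow> x = ereal (d j)"
  shows "\<exists>c. (\<bar>x\<bar> \<noteq> \<infinity> \<longrightarrow> x = ereal c) \<and> (\<Sum>j\<in>J. \<beta> j * d j) = (\<Sum>j\<in>J. \<beta> j) * c"
proof (cases "\<bar>x\<bar> \<noteq> \<infinity>")
  case True
  then have "\<forall>j\<in>J. d j = real_of_ereal x" using assms(4) by force
  then show ?thesis using True by (intro exI[of _ "real_of_ereal x"]) (auto simp: sum_distrib_right)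
next
  case infinite: False
  show ?thesis
  proof (cases "(\<Sum>j\<in>J. \<beta> j) = 0")
    case True
    have "\<forall>j\<in>J. \<beta> j = 0"
    proof (cases "x = \<infinity>")
      case True
      then show ?thesis using assms(1,2) \<open>(\<Sum>j\<in>J. \<beta> j) = 0\<close> sum_nonneg_eq_0_iff by blast
    next
      case False
      with infinite have "x = -\<infinity>" by (cases x) auto
      then have "\<forall>j\<in>J. - \<beta> j \<ge> 0" "(\<Sum>j\<in>J. - \<beta> j) = 0"
        using assms(3) \<open>(\<Sum>j\<in>J. \<beta> j) = 0\<close> by (auto simp: sum_negf)
      then show ?thesis using assms(1) sum_nonneg_eq_0_iff[of J "\<lambda>j. - \<beta> j"] by auto
    qed
    then show ?thesis using infinite by simp
  next
    case False
    then show ?thesis using infinite by (intro exI[of _ "(\<Sum>j\<in>J. \<beta> j * d j) / (\<Sum>j\<in>J. \<beta> j)"]) simp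
  qed
qed

lemma coherent1_marginalD:
  fixes S :: "('w \<Rightarrow> real) set"
  assumes "coherent1_marginal L P" and "finite S" and "S \<subseteq> L"
    and "\<forall>X\<in>S. P X = \<infinity> \<longrightarrow> \<alpha> X \<ge> 0"
    and "\<forall>X\<in>S. P X = -\<infinity> \<longrightarrow> \<alpha> X \<le> 0"
    and "\<forall>X\<in>S. \<bar>P X\<bar> \<noteq> \<infinity> \<longrightarrow> P X = ereal (c X)"
  shows "(SUP w. ereal (\<Sum>X\<in>S. \<alpha> X * (X w - c X))) \<ge> 0"
proof -
  define S' where "S' = (\<lambda>X. (X, UNIV :: 'w set)) ` S"
  have "(SUP w. ereal (\<Sum>i\<in>S'. \<alpha> (fst i) * indicator (snd i) w * (fst i w - c (fst i)))) \<ge> 0"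
  proof -
    have "\<forall>S \<alpha> c. finite S \<and> S \<subseteq> L \<times> {UNIV} \<and>
        (\<forall>i\<in>S. P (fst i) = \<infinity> \<longrightarrow> \<alpha> i \<ge> 0) \<and> (\<forall>i\<in>S. P (fst i) = -\<infinity> \<longrightarrow> \<alpha> i \<le> 0) \<and>
        (\<forall>i\<in>S. \<bar>P (fst i)\<bar> \<noteq> \<infinity> \<longrightarrow> P (fst i) = ereal (c i)) \<longrightarrow>
        (SUP w. ereal (\<Sum>i\<in>S. \<alpha> i * indicator (snd i) w * (fst i w - c i))) \<ge> 0"
      using assms(1) unfolding coherent1_marginal_def coherent1_def by blast
    from spec[OF spec[OF spec[OF this, of S'], of "\<lambda>i. \<alpha> (fst i)"], of "\<lambda>i. c (fst i)"]
    show ?thesis using assms(2-) by (auto simp: S'_def)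
  qed
  moreover have "(\<Sum>i\<in>S'. \<alpha> (fst i) * indicator (snd i) w * (fst i w - c (fst i)))
      = (\<Sum>X\<in>S. \<alpha> X * (X w - c X))" for w
    unfolding S'_def by (subst sum.reindex) (auto simp: inj_on_def)
  ultimately show ?thesis by simp
qed

text \<open>Coherence only quantifies over finite sets of distinct variables; stakes on a repeated
  variable are merged into one stake at a common price.\<close>

lemma coherent1_marginal_family:
  fixes V :: "'j \<Rightarrow> 'w \<Rightarrow> real"
  assumes cm: "coherent1_marginal L P" and fin: "finite J" and VL: "\<forall>j\<in>J. V j \<in> L"
    and pos: "\<forall>j\<in>J. P (V j) = \<infinity> \<longrightarrow> \<beta> j \<ge> 0"
    and neg: "\<forall>j\<in>J. P (V j) = -\<infinity> \<longrightarrow> \<beta> j \<le> 0"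
    and price: "\<forall>j\<in>J. \<bar>P (V j)\<bar> \<noteq> \<infinity> \<longrightarrow> P (V j) = ereal (d j)"
  shows "(SUP w. ereal (\<Sum>j\<in>J. \<beta> j * (V j w - d j))) \<ge> 0"
proof -
  define fibre where "fibre f = {j\<in>J. V j = f}" for f
  define A where "A f = (\<Sum>j\<in>fibre f. \<beta> j)" for f
  have "\<forall>f\<in>V ` J. \<exists>c. (\<bar>P f\<bar> \<noteq> \<infinity> \<longrightarrow> P f = ereal c) \<and>
          (\<Sum>j\<in>fibre f. \<beta> j * d j) = A f * c"
    unfolding A_def using fin pos neg price
    by (intro ballI sum_stakes_common_price) (auto simp: fibre_def)
  then obtain C where C: "\<And>f. f \<in> V ` J \<Longrightarrow> \<bar>P f\<bar> \<noteq> \<infinity> \<longrightarrow> P f = ereal (C f)"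
      "\<And>f. f \<in> V ` J \<Longrightarrow> (\<Sum>j\<in>fibre f. \<beta> j * d j) = A f * C f"
    by metis
  have merge: "(\<Sum>f\<in>V ` J. A f * (f w - C f)) = (\<Sum>j\<in>J. \<beta> j * (V j w - d j))" for w
  proof -
    have "(\<Sum>f\<in>V ` J. A f * (f w - C f)) = (\<Sum>f\<in>V ` J. \<Sum>j\<in>fibre f. \<beta> j * (V j w - d j))"
      using C(2) by (intro sum.cong refl)
        (simp add: A_def fibre_def sum_distrib_right right_diff_distrib sum_subtractf)
    also have "\<dots> = (\<Sum>j\<in>J. \<beta> j * (V j w - d j))"
      unfolding fibre_def using sum.image_gen[OF fin, of "\<lambda>j. \<beta> j * (V j w - d j)" V] by simp
    finally show ?thesis .
  qed
  have "(SUP w. ereal (\<Sum>f\<in>V ` J. A f * (f w - C f))) \<ge> 0"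
  proof (rule coherent1_marginalD[OF cm])
    show "finite (V ` J)" "V ` J \<subseteq> L" using fin VL by auto
    show "\<forall>f\<in>V ` J. P f = \<infinity> \<longrightarrow> A f \<ge> 0"
      using pos by (auto simp: A_def fibre_def intro!: sum_nonneg)
    show "\<forall>f\<in>V ` J. P f = -\<infinity> \<longrightarrow> A f \<le> 0"
      using neg by (auto simp: A_def fibre_def intro!: sum_nonpos)
    show "\<forall>f\<in>V ` J. \<bar>P f\<bar> \<noteq> \<infinity> \<longrightarrow> P f = ereal (C f)"
      by (intro ballI C(1))
  qed
  then show ?thesis unfolding merge .
qed

text \<open>An infinite prevision with a nonzero stake \<open>\<beta>\<close> gets the price \<open>K / \<beta>\<close>, contributing
  an arbitrarily large \<open>K\<close> to the real sum.\<close>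

lemma ereal_sum_gt_real_prices:
  fixes x :: "'j \<Rightarrow> ereal"
  assumes fin: "finite J" and no_MInf: "\<forall>j\<in>J. ereal (\<beta> j) * x j \<noteq> -\<infinity>"
    and gt: "ereal k < (\<Sum>j\<in>J. ereal (\<beta> j) * x j)"
  shows "\<exists>d. (\<forall>j\<in>J. \<bar>x j\<bar> \<noteq> \<infinity> \<longrightarrow> x j = ereal (d j)) \<and> k < (\<Sum>j\<in>J. \<beta> j * d j)"
proof -
  define F where "F = {j\<in>J. \<bar>x j\<bar> \<noteq> \<infinity>}"
  define I where "I = {j\<in>J. \<bar>x j\<bar> = \<infinity> \<and> \<beta> j \<noteq> 0}"
  define sF where "sF = (\<Sum>j\<in>F. \<beta> j * real_of_ereal (x j))"
  define K where "K = \<bar>sF\<bar> + \<bar>k\<bar> + 1"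
  define d where "d j = (if j \<in> F then real_of_ereal (x j) else if \<beta> j = 0 then 0 else K / \<beta> j)" for j
  have prices: "\<forall>j\<in>J. \<bar>x j\<bar> \<noteq> \<infinity> \<longrightarrow> x j = ereal (d j)"
    by (auto simp: d_def F_def)
  have "(\<Sum>j\<in>J. \<beta> j * d j)
      = (\<Sum>j\<in>J. (if j \<in> F then \<beta> j * real_of_ereal (x j) else 0) + (if j \<in> I then K else 0))"
    by (intro sum.cong) (auto simp: d_def F_def I_def)
  also have "\<dots> = sF + K * card I"
    using fin unfolding sum.distrib sF_def by (simp add: sum.If_cases F_def I_def Int_def)
  finally have sum_d: "(\<Sum>j\<in>J. \<beta> j * d j) = sF + K * card I" .
  have "k < (\<Sum>j\<in>J. \<beta> j * d j)"
  proof (cases "I = {}")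
    case False
    then have "card I \<ge> 1" using fin unfolding I_def by (simp add: Suc_le_eq card_gt_0_iff)
    then have "K \<le> K * card I" by (simp add: K_def mult_le_cancel_left1)
    then show ?thesis using sum_d K_def by linarith
  next
    case True
    have "(\<Sum>j\<in>J. ereal (\<beta> j) * x j) = (\<Sum>j\<in>J. ereal (if j \<in> F then \<beta> j * real_of_ereal (x j) else 0))"
    proof (intro sum.cong refl)
      fix j assume "j \<in> J"
      with True show "ereal (\<beta> j) * x j = ereal (if j \<in> F then \<beta> j * real_of_ereal (x j) else 0)"
        by (cases "x j") (auto simp: F_def I_def)
    qed
    also have "\<dots> = ereal sF"
      unfolding sum_ereal sF_def using fin by (simp add: sum.If_cases F_def Int_def)
    finally show ?thesis using gt sum_d True by simp
  qed
  with prices show ?thesis by blast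
qed

lemma coherent1_marginal_sum_le:
  assumes cm: "coherent1_marginal L P" and fin: "finite J" and VL: "\<forall>j\<in>J. V j \<in> L"
    and bound: "\<forall>w. (\<Sum>j\<in>J. \<beta> j * V j w) \<le> k"
    and no_MInf: "\<forall>j\<in>J. ereal (\<beta> j) * P (V j) \<noteq> -\<infinity>"
  shows "(\<Sum>j\<in>J. ereal (\<beta> j) * P (V j)) \<le> ereal k"
proof (rule ccontr)
  assume "\<not> ?thesis"
  then have "ereal k < (\<Sum>j\<in>J. ereal (\<beta> j) * P (V j))" by simp
  then obtain d where prices: "\<forall>j\<in>J. \<bar>P (V j)\<bar> \<noteq> \<infinity> \<longrightarrow> P (V j) = ereal (d j)"
      and gt: "k < (\<Sum>j\<in>J. \<beta> j * d j)"
    using ereal_sum_gt_real_prices[OF fin no_MInf] by blast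
  have signs: "\<forall>j\<in>J. P (V j) = \<infinity> \<longrightarrow> \<beta> j \<ge> 0" "\<forall>j\<in>J. P (V j) = -\<infinity> \<longrightarrow> \<beta> j \<le> 0"
    using no_MInf by (auto simp: not_le)
  have "(SUP w. ereal (\<Sum>j\<in>J. \<beta> j * (V j w - d j))) \<ge> 0"
    using coherent1_marginal_family[where V = V and \<beta> = \<beta> and d = d] cm fin VL signs prices by blast
  moreover have "(SUP w. ereal (\<Sum>j\<in>J. \<beta> j * (V j w - d j))) \<le> ereal (k - (\<Sum>j\<in>J. \<beta> j * d j))"
  proof (rule SUP_least)
    fix w
    have "(\<Sum>j\<in>J. \<beta> j * (V j w - d j)) = (\<Sum>j\<in>J. \<beta> j * V j w) - (\<Sum>j\<in>J. \<beta> j * d j)"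
      by (simp add: right_diff_distrib sum_subtractf)
    then show "ereal (\<Sum>j\<in>J. \<beta> j * (V j w - d j)) \<le> ereal (k - (\<Sum>j\<in>J. \<beta> j * d j))"
      using bound by simp
  qed
  moreover have "ereal (k - (\<Sum>j\<in>J. \<beta> j * d j)) < 0" using gt by simp
  ultimately show False by (meson leD order_trans)
qed

lemma coherent1_marginal_le:
  assumes "coherent1_marginal L P" and "X \<in> L" and "\<forall>w. X w \<le> k"
  shows "P X \<le> ereal k"
proof (cases "P X = -\<infinity>")
  case False
  have "(\<Sum>j\<in>{0::nat}. ereal 1 * P X) \<le> ereal k"
    by (rule coherent1_marginal_sum_le[OF assms(1)]) (use assms False in auto)
  then show ?thesis by simp
qed simp

lemma coherent1_marginal_ge:
  assumes "coherent1_marginal L P" and "X \<in> L" and "\<forall>w. k \<le> X w"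
  shows "ereal k \<le> P X"
proof (cases "P X = \<infinity>")
  case False
  have "(\<Sum>j\<in>{0::nat}. ereal (-1) * P X) \<le> ereal (-k)"
    by (rule coherent1_marginal_sum_le[OF assms(1)]) (use assms False in auto)
  then show ?thesis by (cases "P X") auto
qed simp

lemma coherent1_marginal_const:
  assumes "coherent1_marginal L P" and "(\<lambda>w. c) \<in> L"
  shows "P (\<lambda>w. c) = ereal c"
  using coherent1_marginal_le[OF assms, of c] coherent1_marginal_ge[OF assms, of c] by simp

lemma coherent1_marginal_mono:
  assumes cm: "coherent1_marginal L P" and "X \<in> L" and "Y \<in> L" and "\<forall>w. X w \<le> Y w"
  shows "P X \<le> P Y"
proof (cases "P X = -\<infinity> \<or> P Y = \<infinity>")
  case False
  have "(\<Sum>j\<in>{0::nat,1}. ereal (if j = 0 then 1 else -1) * P (if j = 0 then X else Y)) \<le> ereal 0"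
    by (rule coherent1_marginal_sum_le[OF cm]) (use assms False in \<open>auto simp: ereal_uminus_eq_reorder\<close>)
  then show ?thesis using False by (cases "P X"; cases "P Y") auto
qed auto

lemma ereal_minus_mult: "ereal (-a) * x = - (ereal a * x)"
  by (cases x) auto

text \<open>Each inequality is one application of the sum bound, with the stakes
  \<open>1, -a, -b\<close> (respectively \<open>-1, a, b\<close>) on \<open>a X + b Y, X, Y\<close>.\<close>

lemma coherent1_marginal_linear:
  assumes cm: "coherent1_marginal L P" and "X \<in> L" and "Y \<in> L" and "(\<lambda>w. a * X w + b * Y w) \<in> L"
    and not_opposite: "{ereal a * P X, ereal b * P Y} \<noteq> {\<infinity>, -\<infinity>}"
  shows "P (\<lambda>w. a * X w + b * Y w) = ereal a * P X + ereal b * P Y"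
proof -
  define Z where "Z = (\<lambda>w. a * X w + b * Y w)"
  define u where "u = ereal a * P X"
  define v where "v = ereal b * P Y"
  have uv: "\<not> (u = \<infinity> \<and> v = -\<infinity>)" "\<not> (u = -\<infinity> \<and> v = \<infinity>)"
    using not_opposite unfolding u_def v_def by auto
  have "P Z \<le> u + v"
  proof (cases "P Z = -\<infinity> \<or> u = \<infinity> \<or> v = \<infinity>")
    case True then show ?thesis using uv by (cases u; cases v) auto
  next
    case False
    have "(\<Sum>j\<in>{0::nat,1,2}. ereal (if j = 0 then 1 else if j = 1 then -a else -b) *
        P (if j = 0 then Z else if j = 1 then X else Y)) \<le> ereal 0"
      by (rule coherent1_marginal_sum_le[OF cm])
        (use assms False in \<open>auto simp: Z_def ereal_minus_mult u_def v_def ereal_uminus_eq_reorder\<close>)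
    then have "P Z + (- u + - v) \<le> 0" by (simp add: ereal_minus_mult u_def v_def zero_ereal_def)
    then show ?thesis using False by (cases "P Z"; cases u; cases v) auto
  qed
  moreover have "u + v \<le> P Z"
  proof (cases "P Z = \<infinity> \<or> u = -\<infinity> \<or> v = -\<infinity>")
    case True then show ?thesis using uv by (cases u; cases v) auto
  next
    case False
    have "(\<Sum>j\<in>{0::nat,1,2}. ereal (if j = 0 then -1 else if j = 1 then a else b) *
        P (if j = 0 then Z else if j = 1 then X else Y)) \<le> ereal 0"
      by (rule coherent1_marginal_sum_le[OF cm])
        (use assms False in \<open>auto simp: Z_def ereal_minus_mult u_def v_def ereal_uminus_eq_reorder\<close>)
    then have "- P Z + (u + v) \<le> 0" by (simp add: ereal_minus_mult u_def v_def zero_ereal_def)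
    then show ?thesis using False by (cases "P Z"; cases u; cases v) auto
  qed
  ultimately show ?thesis unfolding Z_def u_def v_def by (rule antisym)
qed

lemma rv_linear_space_lincomb:
  assumes "rv_linear_space L" and "X \<in> L" and "Y \<in> L"
  shows "(\<lambda>w. a * X w + b * Y w) \<in> L"
proof -
  have add: "\<forall>X\<in>L. \<forall>Y\<in>L. (\<lambda>w. X w + Y w) \<in> L"
    and aX: "(\<lambda>w. a * X w) \<in> L" and bY: "(\<lambda>w. b * Y w) \<in> L"
    using assms unfolding rv_linear_space_def by auto
  from bspec[OF bspec[OF add aX] bY] show ?thesis by simp
qed

lemma coherent1_marginal_fa_expectation:
  assumes "rv_linear_space L" and cm: "coherent1_marginal L P"
  shows "fa_expectation L P"
proof -
  have "(\<lambda>w. 1) \<in> L" using assms(1) unfolding rv_linear_space_def by blast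
  then show ?thesis
    unfolding fa_expectation_def
    using coherent1_marginal_mono[OF cm] coherent1_marginal_linear[OF cm _ _ rv_linear_space_lincomb[OF assms(1)]]
      coherent1_marginal_const[OF cm, of 1] by (simp add: one_ereal_def)
qed

lemma coherent1_marginal_indicator_pos:
  assumes cm: "coherent1_marginal L P" and BL: "indicator B \<in> L" and pos: "0 < P (indicator B)"
  shows "B \<noteq> {}" and "\<exists>p. P (indicator B) = ereal p \<and> 0 < p"
proof -
  have "P (indicator B) \<le> ereal 1"
    by (rule coherent1_marginal_le[OF cm BL]) (simp add: indicator_def)
  with pos show "\<exists>p. P (indicator B) = ereal p \<and> 0 < p" by (cases "P (indicator B)") auto
  show "B \<noteq> {}"
  proof
    assume "B = {}"
    then have "P (indicator B) \<le> ereal 0" using coherent1_marginal_le[OF cm BL, of 0] by simp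
    with pos show False by (simp add: zero_ereal_def)
  qed
qed

lemma ereal_divide_pos_eq_PInfty: "0 < q \<Longrightarrow> x / ereal q = \<infinity> \<longleftrightarrow> x = \<infinity>"
  by (cases x) (auto simp: divide_ereal_def)

lemma ereal_divide_pos_eq_MInfty: "0 < q \<Longrightarrow> x / ereal q = -\<infinity> \<longleftrightarrow> x = -\<infinity>"
  by (cases x) (auto simp: divide_ereal_def)

lemma ereal_divide_pos_eq_ereal: "0 < q \<Longrightarrow> x / ereal q = ereal c \<longleftrightarrow> x = ereal (c * q)"
  by (cases x) (auto simp: divide_ereal_def field_simps)

lemma ereal_divide_pos_add: "0 < q \<Longrightarrow> (x + y) / ereal q = x / ereal q + y / ereal q"
  by (cases x; cases y) (auto simp: divide_ereal_def distrib_right)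

lemma ereal_mult_divide_pos: "0 < q \<Longrightarrow> ereal a * (x / ereal q) = ereal a * x / ereal q"
  by (cases x) (auto simp: divide_ereal_def)

lemma fa_expectation_conditional:
  assumes E: "fa_expectation L E" and cl: "\<forall>X\<in>L. (\<lambda>w. X w * indicator B w) \<in> L"
    and p: "E (indicator B) = ereal p" "0 < p"
  shows "fa_expectation L (\<lambda>X. E (\<lambda>w. X w * indicator B w) / E (indicator B))"
  unfolding fa_expectation_def p(1)
proof (intro conjI ballI allI impI)
  fix X Y assume "X \<in> L" "Y \<in> L" "\<forall>w. X w \<le> Y w"
  then have "E (\<lambda>w. X w * indicator B w) \<le> E (\<lambda>w. Y w * indicator B w)"
    using E cl unfolding fa_expectation_def by (simp add: indicator_def)
  then show "E (\<lambda>w. X w * indicator B w) / ereal p \<le> E (\<lambda>w. Y w * indicator B w) / ereal p"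
    using p(2) by simp
next
  fix X Y a b assume XY: "X \<in> L" "Y \<in> L"
  define u where "u = ereal a * E (\<lambda>w. X w * indicator B w)"
  define v where "v = ereal b * E (\<lambda>w. Y w * indicator B w)"
  assume "{ereal a * (E (\<lambda>w. X w * indicator B w) / ereal p),
      ereal b * (E (\<lambda>w. Y w * indicator B w) / ereal p)} \<noteq> {\<infinity>, -\<infinity>}"
  then have "{u / ereal p, v / ereal p} \<noteq> {\<infinity>, -\<infinity>}"
    unfolding u_def v_def using p(2) by (simp add: ereal_mult_divide_pos)
  then have "{u, v} \<noteq> {\<infinity>, -\<infinity>}"
    using p(2) by (auto simp: doubleton_eq_iff ereal_divide_pos_eq_PInfty ereal_divide_pos_eq_MInfty)
  moreover have "(\<lambda>w. (a * X w + b * Y w) * indicator B w)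
      = (\<lambda>w. a * (X w * indicator B w) + b * (Y w * indicator B w))"
    by (auto simp: algebra_simps)
  ultimately have "E (\<lambda>w. (a * X w + b * Y w) * indicator B w) = u + v"
    using E cl XY unfolding fa_expectation_def u_def v_def by simp
  then show "E (\<lambda>w. (a * X w + b * Y w) * indicator B w) / ereal p
      = ereal a * (E (\<lambda>w. X w * indicator B w) / ereal p) + ereal b * (E (\<lambda>w. Y w * indicator B w) / ereal p)"
    using p(2) by (simp add: u_def v_def ereal_divide_pos_add ereal_mult_divide_pos)
next
  have "(\<lambda>w. 1 * indicator B w) = (indicator B :: 'a \<Rightarrow> real)" by auto
  then show "E (\<lambda>w. 1 * indicator B w) / ereal p = 1"
    using p by (simp add: divide_ereal_def)
qed

text \<open>A conditional gamble splits into two marginal ones: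
  \<open>\<alpha> B (X - c) = \<alpha> (X B - c p) - \<alpha> c (B - p)\<close> with \<open>p = P(B)\<close>.\<close>

lemma coherent1_conditional:
  assumes cm: "coherent1_marginal L P"
    and I: "\<forall>i\<in>I. (\<lambda>w. fst i w * indicator (snd i) w) \<in> L \<and> indicator (snd i) \<in> L
              \<and> 0 < P (indicator (snd i))"
  shows "coherent1 I (\<lambda>X B. P (\<lambda>w. X w * indicator B w) / P (indicator B))"
  unfolding coherent1_def
proof (intro conjI allI impI ballI)
  fix i assume "i \<in> I"
  then show "snd i \<noteq> {}" using I coherent1_marginal_indicator_pos(1)[OF cm] by blast
next
  fix S :: "(('a \<Rightarrow> real) \<times> 'a set) set" and \<alpha> c :: "('a \<Rightarrow> real) \<times> 'a set \<Rightarrow> real"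
  define Lc where "Lc i = P (\<lambda>w. fst i w * indicator (snd i) w) / P (indicator (snd i))" for i
  assume "finite S \<and> S \<subseteq> I \<and>
      (\<forall>i\<in>S. P (\<lambda>w. fst i w * indicator (snd i) w) / P (indicator (snd i)) = \<infinity> \<longrightarrow> 0 \<le> \<alpha> i) \<and>
      (\<forall>i\<in>S. P (\<lambda>w. fst i w * indicator (snd i) w) / P (indicator (snd i)) = -\<infinity> \<longrightarrow> \<alpha> i \<le> 0) \<and>
      (\<forall>i\<in>S. \<bar>P (\<lambda>w. fst i w * indicator (snd i) w) / P (indicator (snd i))\<bar> \<noteq> \<infinity> \<longrightarrow>
         P (\<lambda>w. fst i w * indicator (snd i) w) / P (indicator (snd i)) = ereal (c i))"
  then have fin: "finite S" and SI: "S \<subseteq> I"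
    and pos: "\<forall>i\<in>S. Lc i = \<infinity> \<longrightarrow> 0 \<le> \<alpha> i" and neg: "\<forall>i\<in>S. Lc i = -\<infinity> \<longrightarrow> \<alpha> i \<le> 0"
    and price: "\<forall>i\<in>S. \<bar>Lc i\<bar> \<noteq> \<infinity> \<longrightarrow> Lc i = ereal (c i)"
    unfolding Lc_def by auto
  have "\<forall>i\<in>S. \<exists>q. P (indicator (snd i)) = ereal q \<and> 0 < q"
    using SI I coherent1_marginal_indicator_pos(2)[OF cm] by blast
  then obtain p where p: "\<And>i. i \<in> S \<Longrightarrow> P (indicator (snd i)) = ereal (p i)" "\<And>i. i \<in> S \<Longrightarrow> 0 < p i"
    by metis
  define J where "J = S \<times> (UNIV :: bool set)"
  define V where "V j = (if snd j then (\<lambda>w. fst (fst j) w * indicator (snd (fst j)) w)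
      else indicator (snd (fst j)))" for j :: "(('a \<Rightarrow> real) \<times> 'a set) \<times> bool"
  define \<beta> where "\<beta> j = (if snd j then \<alpha> (fst j) else - (\<alpha> (fst j) * c (fst j)))" for j
  define d where "d j = (if snd j then c (fst j) * p (fst j) else p (fst j))" for j
  have "(SUP w. ereal (\<Sum>j\<in>J. \<beta> j * (V j w - d j))) \<ge> 0"
  proof (rule coherent1_marginal_family[OF cm])
    show "finite J" using fin by (simp add: J_def)
    show "\<forall>j\<in>J. V j \<in> L" using SI I by (auto simp: J_def V_def)
    show "\<forall>j\<in>J. P (V j) = \<infinity> \<longrightarrow> \<beta> j \<ge> 0" "\<forall>j\<in>J. P (V j) = -\<infinity> \<longrightarrow> \<beta> j \<le> 0"
      using pos neg p
      by (auto simp: J_def V_def \<beta>_def Lc_def ereal_divide_pos_eq_PInfty ereal_divide_pos_eq_MInfty)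
    show "\<forall>j\<in>J. \<bar>P (V j)\<bar> \<noteq> \<infinity> \<longrightarrow> P (V j) = ereal (d j)"
    proof (intro ballI impI)
      fix j assume "j \<in> J" and finite: "\<bar>P (V j)\<bar> \<noteq> \<infinity>"
      then have i: "fst j \<in> S" by (auto simp: J_def)
      show "P (V j) = ereal (d j)"
      proof (cases "snd j")
        case True
        with finite have "\<bar>Lc (fst j)\<bar> \<noteq> \<infinity>"
          using p[OF i] by (auto simp: V_def Lc_def ereal_divide_pos_eq_PInfty ereal_divide_pos_eq_MInfty)
        then have "Lc (fst j) = ereal (c (fst j))" by (rule price[rule_format, OF i])
        with True show ?thesis using p[OF i] by (simp add: Lc_def V_def d_def ereal_divide_pos_eq_ereal)
      qed (use p[OF i] in \<open>simp add: V_def d_def\<close>)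
    qed
  qed
  moreover have "(\<Sum>j\<in>J. \<beta> j * (V j w - d j)) = (\<Sum>i\<in>S. \<alpha> i * indicator (snd i) w * (fst i w - c i))" for w
  proof -
    have "(\<Sum>j\<in>J. \<beta> j * (V j w - d j)) = (\<Sum>i\<in>S. \<Sum>t\<in>UNIV. \<beta> (i, t) * (V (i, t) w - d (i, t)))"
      unfolding J_def by (subst sum.cartesian_product) (simp add: case_prod_unfold)
    also have "\<dots> = (\<Sum>i\<in>S. \<alpha> i * indicator (snd i) w * (fst i w - c i))"
      by (intro sum.cong refl) (simp add: UNIV_bool \<beta>_def V_def d_def algebra_simps)
    finally show ?thesis .
  qed
  ultimately show "(SUP w. ereal (\<Sum>i\<in>S. \<alpha> i * indicator (snd i) w * (fst i w - c i))) \<ge> 0"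
    by simp
qed

theorem proposition6p1:
  fixes L :: "('w \<Rightarrow> real) set" and P :: "('w \<Rightarrow> real) \<Rightarrow> ereal"
  assumes "rv_linear_space L"
    and "coherent1_marginal L P"
    and "\<forall>X\<in>L. \<forall>B\<in>{B. indicator B \<in> L \<and> P (indicator B) > 0}.
           (\<lambda>w. X w * indicator B w) \<in> L"
  shows "fa_cond_expectation L {B. indicator B \<in> L \<and> P (indicator B) > 0} P
           (\<lambda>X B. P (\<lambda>w. X w * indicator B w) / P (indicator B))"
proof -
  note cm = assms(2)
  define \<B> where "\<B> = {B. indicator B \<in> L \<and> P (indicator B) > 0}"
  have closed: "\<forall>X\<in>L. \<forall>B\<in>\<B>. (\<lambda>w. X w * indicator B w) \<in> L" using assms(3) by (simp add: \<B>_def)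
  have faP: "fa_expectation L P" by (rule coherent1_marginal_fa_expectation[OF assms(1) cm])
  have "indicator UNIV = (\<lambda>w::'w. 1::real)" "(\<lambda>w::'w. 1::real) \<in> L"
    using assms(1) by (auto simp: rv_linear_space_def)
  then have "UNIV \<in> \<B>" using coherent1_marginal_const[OF cm] by (simp add: \<B>_def)
  moreover have "\<forall>B\<in>\<B>. B \<noteq> {}" using coherent1_marginal_indicator_pos(1)[OF cm] by (simp add: \<B>_def)
  moreover have "fa_expectation L (\<lambda>X. P (\<lambda>w. X w * indicator B w) / P (indicator B))" if "B \<in> \<B>" for B
    using that closed coherent1_marginal_indicator_pos(2)[OF cm] fa_expectation_conditional[OF faP]
    by (force simp: \<B>_def)
  moreover have "(\<lambda>w. X w * indicator B w * indicator B w) = (\<lambda>w. X w * indicator B w)"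
    for X :: "'w \<Rightarrow> real" and B by (simp add: fun_eq_iff indicator_def)
  moreover have "coherent1 (L \<times> \<B>) (\<lambda>X B. P (\<lambda>w. X w * indicator B w) / P (indicator B))"
    using closed by (intro coherent1_conditional[OF cm]) (auto simp: \<B>_def)
  ultimately show ?thesis
    unfolding fa_cond_expectation_def \<B>_def[symmetric] using assms(1) closed faP by simp
qed

end
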